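(* A prime tournament $G$ with $|V(G)| \ge 3$ does not have a subtournament isomorphic to $D_4$ if and only if $G$ is isomorphic to $T_n$ for some odd $n \ge 3$.
   Context: A tournament is a finite, non-null, loopless directed graph in which for any two distinct vertices $u,v$ there is exactly one edge with both ends in $\{u,v\}$; write $u\to v$ for the edge from $u$ to $v$. A subtournament is the tournament induced on a nonempty vertex subset. A homogeneous set of $G$ is a set $X\subseteq V(G)$ such that each $v\in V(G)\setminus X$ either has $v\to x$ for all $x\in X$ or $x\to v$ for all $x \in X$; $G$ is prime if every homogeneous set $X$ has $|X|\le 1$ or $X=V(G)$. $D_4$ is the 4-vertex tournament consisting of a cyclic triangle $C$ and a vertex $v$ with $v \to c$ for every vertex $c$ of $C$. For $n=2k+1$, $T_n$ is the tournament on $v_1,\dots,v_n$ with $v_i\to v_j$ iff $j\equiv i+1,\dots,i+k \pmod n$. *)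

theory Defs
  imports Main
begin

text \<open>A tournament is given by a finite nonempty vertex set V and an adjacency
  relation E (E u v means u -> v); only the restriction of E to V matters.\<close>

definition tournament :: "'a set \<Rightarrow> ('a \<Rightarrow> 'a \<Rightarrow> bool) \<Rightarrow> bool" where
  "tournament V E \<longleftrightarrow> finite V \<and> V \<noteq> {} \<and> (\<forall>u\<in>V. \<not> E u u) \<and>
     (\<forall>u\<in>V. \<forall>v\<in>V. u \<noteq> v \<longrightarrow> (E u v \<longleftrightarrow> \<not> E v u))"

definition homogeneous :: "'a set \<Rightarrow> ('a \<Rightarrow> 'a \<Rightarrow> bool) \<Rightarrow> 'a set \<Rightarrow> bool" where
  "homogeneous V E X \<longleftrightarrow> X \<subseteq> V \<and>
     (\<forall>v\<in>V - X. (\<forall>x\<in>X. E v x) \<or> (\<forall>x\<in>X. E x v))"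

definition prime_tournament :: "'a set \<Rightarrow> ('a \<Rightarrow> 'a \<Rightarrow> bool) \<Rightarrow> bool" where
  "prime_tournament V E \<longleftrightarrow>
     (\<forall>X. homogeneous V E X \<longrightarrow> card X \<le> 1 \<or> X = V)"

definition tourn_iso :: "'a set \<Rightarrow> ('a \<Rightarrow> 'a \<Rightarrow> bool) \<Rightarrow> 'b set \<Rightarrow> ('b \<Rightarrow> 'b \<Rightarrow> bool) \<Rightarrow> bool" where
  "tourn_iso V E W F \<longleftrightarrow>
     (\<exists>f. bij_betw f V W \<and> (\<forall>u\<in>V. \<forall>v\<in>V. E u v \<longleftrightarrow> F (f u) (f v)))"

definition has_subtournament :: "'a set \<Rightarrow> ('a \<Rightarrow> 'a \<Rightarrow> bool) \<Rightarrow> 'b set \<Rightarrow> ('b \<Rightarrow> 'b \<Rightarrow> bool) \<Rightarrow> bool" where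
  "has_subtournament V E W F \<longleftrightarrow> (\<exists>S. S \<subseteq> V \<and> S \<noteq> {} \<and> tourn_iso S E W F)"

definition D4_V :: "nat set" where "D4_V = {0,1,2,3}"

definition D4_E :: "nat \<Rightarrow> nat \<Rightarrow> bool" where
  "D4_E u v \<longleftrightarrow> (u, v) \<in> {(0,1), (1,2), (2,0), (3,0), (3,1), (3,2)}"

text \<open>T_n for n = 2k+1, vertices 0..n-1 (the paper's v_1..v_n shifted by one):
  i -> j iff j - i is congruent to one of 1..k modulo n.\<close>
definition T_V :: "nat \<Rightarrow> nat set" where "T_V n = {0..<n}"

definition T_E :: "nat \<Rightarrow> nat \<Rightarrow> nat \<Rightarrow> bool" where
  "T_E n i j \<longleftrightarrow> (let d = (int j - int i) mod int n in 1 \<le> d \<and> d \<le> int ((n - 1) div 2))"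

end

theory Submission
  imports Defs
begin

text \<open>
  A vertex dominating a cyclic triangle is exactly a copy of \<open>D\<^sub>4\<close>. In a prime tournament
  without one, no vertex is dominated by a cyclic triangle either: otherwise the common
  out-neighbourhood \<open>B\<close> of the triangle is closed under out-edges, and \<open>V - B\<close> is a proper
  homogeneous set with at least two elements. So \<open>G\<close> is locally transitive.

  Fix a vertex \<open>v\<^sub>0\<close> with out-neighbourhood \<open>Out\<close> and in-neighbourhood \<open>In\<close>, and rank
  \<open>x \<in> Out\<close> by the number of its out-neighbours in \<open>In\<close>. Local transitivity makes the rank
  monotone along the edges of \<open>Out\<close>; primality makes it injective and positive, since the
  vertices of equal rank (together with \<open>v\<^sub>0\<close> for rank 0) would form a homogeneous set.
  Dually for \<open>In\<close>, so \<open>|Out| = |In| = k\<close>, both ranks enumerate \<open>1..k\<close>, and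
  \<open>x \<rightarrow> y\<close> holds iff the two ranks sum to more than \<open>k\<close>. Placing \<open>v\<^sub>0\<close> at 0, \<open>Out\<close>
  at \<open>1..k\<close> and \<open>In\<close> at \<open>k+1..2k\<close> then gives an isomorphism onto \<open>T\<^sub>2\<^sub>k\<^sub>+\<^sub>1\<close>.
  Conversely, inside an out-neighbourhood of \<open>T\<^sub>n\<close> every edge increases the offset from
  the centre, so \<open>T\<^sub>n\<close> has no \<open>D\<^sub>4\<close>.
\<close>

lemma tournament_irrefl: "tournament V E \<Longrightarrow> u \<in> V \<Longrightarrow> \<not> E u u"
  unfolding tournament_def by blast

lemma tournament_asym: "tournament V E \<Longrightarrow> u \<in> V \<Longrightarrow> v \<in> V \<Longrightarrow> E u v \<Longrightarrow> \<not> E v u"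
  unfolding tournament_def by metis

lemma tournament_total:
  "tournament V E \<Longrightarrow> u \<in> V \<Longrightarrow> v \<in> V \<Longrightarrow> u \<noteq> v \<Longrightarrow> \<not> E u v \<Longrightarrow> E v u"
  unfolding tournament_def by blast

lemma tournament_converse: "tournament V E\<inverse>\<inverse> \<longleftrightarrow> tournament V E"
  unfolding tournament_def by auto

lemma homogeneous_converse: "homogeneous V E\<inverse>\<inverse> X \<longleftrightarrow> homogeneous V E X"
  unfolding homogeneous_def by auto

lemma prime_tournament_converse: "prime_tournament V E\<inverse>\<inverse> \<longleftrightarrow> prime_tournament V E"
  unfolding prime_tournament_def homogeneous_converse ..

lemma prime_tournament_homogeneous_eq:
  assumes "finite V" "prime_tournament V E" "homogeneous V E X"
    and "x \<in> X" "y \<in> X" "z \<in> V" "z \<notin> X"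
  shows "x = y"
proof -
  have "finite X" using assms(1,3) finite_subset unfolding homogeneous_def by blast
  moreover have "card X \<le> 1" using assms(2,3,6,7) unfolding prime_tournament_def by blast
  ultimately show ?thesis using assms(4,5) card_le_Suc0_iff_eq by auto
qed

lemma tourn_iso_of_edge_map:
  assumes V: "tournament V E" and W: "tournament W F"
    and f: "f ` V \<subseteq> W" "card W = card V"
    and edges: "\<And>u v. u \<in> V \<Longrightarrow> v \<in> V \<Longrightarrow> E u v \<Longrightarrow> F (f u) (f v)"
  shows "tourn_iso V E W F"
proof -
  have inj: "inj_on f V"
  proof (rule inj_onI, rule ccontr)
    fix u v assume uv: "u \<in> V" "v \<in> V" "f u = f v" "u \<noteq> v"
    then have "F (f u) (f u)" using tournament_total[OF V] edges by metis
    then show False using tournament_irrefl[OF W] f(1) uv(1) by blast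
  qed
  have "finite W" using W unfolding tournament_def by blast
  then have "f ` V = W" using f card_image[OF inj] by (metis card_subset_eq)
  moreover have "E u v \<longleftrightarrow> F (f u) (f v)" if "u \<in> V" "v \<in> V" for u v
  proof
    assume "F (f u) (f v)"
    moreover have "f u \<in> W" "f v \<in> W" using f(1) that by blast+
    ultimately show "E u v"
      using that edges tournament_irrefl[OF W] tournament_asym[OF W] tournament_total[OF V]
      by metis
  qed (use edges that in blast)
  ultimately show ?thesis unfolding tourn_iso_def bij_betw_def using inj by blast
qed

section \<open>Local transitivity\<close>

definition cyclic_triangle :: "('a \<Rightarrow> 'a \<Rightarrow> bool) \<Rightarrow> 'a \<Rightarrow> 'a \<Rightarrow> 'a \<Rightarrow> bool" where
  "cyclic_triangle E a b c \<longleftrightarrow> E a b \<and> E b c \<and> E c a"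

definition out_locally_transitive :: "'a set \<Rightarrow> ('a \<Rightarrow> 'a \<Rightarrow> bool) \<Rightarrow> bool" where
  "out_locally_transitive V E \<longleftrightarrow> (\<forall>d\<in>V. \<forall>a\<in>V. \<forall>b\<in>V. \<forall>c\<in>V.
     E d a \<and> E d b \<and> E d c \<longrightarrow> \<not> cyclic_triangle E a b c)"

definition locally_transitive :: "'a set \<Rightarrow> ('a \<Rightarrow> 'a \<Rightarrow> bool) \<Rightarrow> bool" where
  "locally_transitive V E \<longleftrightarrow> out_locally_transitive V E \<and> out_locally_transitive V E\<inverse>\<inverse>"

lemma locally_transitive_converse: "locally_transitive V E\<inverse>\<inverse> \<longleftrightarrow> locally_transitive V E"
  unfolding locally_transitive_def by auto

lemma has_subtournament_D4_iff:
  assumes "tournament V E"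
  shows "has_subtournament V E D4_V D4_E \<longleftrightarrow> \<not> out_locally_transitive V E"
proof
  assume "has_subtournament V E D4_V D4_E"
  then obtain S f where S: "S \<subseteq> V" and f: "bij_betw f S D4_V"
    and edges: "\<forall>u\<in>S. \<forall>v\<in>S. E u v \<longleftrightarrow> D4_E (f u) (f v)"
    unfolding has_subtournament_def tourn_iso_def by (elim exE conjE)
  have "f ` S = {0, 1, 2, 3}" using f unfolding bij_betw_def D4_V_def by simp
  then have "0 \<in> f ` S" "1 \<in> f ` S" "2 \<in> f ` S" "3 \<in> f ` S" by simp_all
  then obtain a b c d where abcd: "a \<in> S" "b \<in> S" "c \<in> S" "d \<in> S"
    and "f a = 0" "f b = 1" "f c = 2" "f d = 3"
    by (elim imageE) simp
  then have "E d a" "E d b" "E d c" "E a b" "E b c" "E c a"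
    using edges unfolding D4_E_def by auto
  then show "\<not> out_locally_transitive V E"
    using S abcd unfolding out_locally_transitive_def cyclic_triangle_def by blast
next
  assume "\<not> out_locally_transitive V E"
  then obtain d a b c where V: "d \<in> V" "a \<in> V" "b \<in> V" "c \<in> V"
    and e: "E d a" "E d b" "E d c" "E a b" "E b c" "E c a"
    unfolding out_locally_transitive_def cyclic_triangle_def by blast
  have ne: "d \<noteq> a" "d \<noteq> b" "d \<noteq> c" "a \<noteq> b" "b \<noteq> c" "c \<noteq> a"
    using e tournament_irrefl[OF assms] V by auto
  have rev: "\<not> E a d" "\<not> E b d" "\<not> E c d" "\<not> E b a" "\<not> E c b" "\<not> E a c"
    using e tournament_asym[OF assms] V by blast+
  define f where
    "f x = (if x = a then 0 else if x = b then 1 else if x = c then 2 else 3::nat)" for x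
  have f: "f a = 0" "f b = 1" "f c = 2" "f d = 3" unfolding f_def using ne by auto
  have "bij_betw f {a, b, c, d} D4_V"
    unfolding bij_betw_def inj_on_def D4_V_def using f by auto
  moreover have "\<forall>u\<in>{a, b, c, d}. \<forall>v\<in>{a, b, c, d}. E u v \<longleftrightarrow> D4_E (f u) (f v)"
    using e rev tournament_irrefl[OF assms V(1)] tournament_irrefl[OF assms V(2)]
      tournament_irrefl[OF assms V(3)] tournament_irrefl[OF assms V(4)]
    unfolding ball_simps insert_iff empty_iff f D4_E_def by simp
  ultimately have "tourn_iso {a, b, c, d} E D4_V D4_E" unfolding tourn_iso_def by blast
  moreover have "{a, b, c, d} \<subseteq> V" using V by blast
  ultimately show "has_subtournament V E D4_V D4_E"
    unfolding has_subtournament_def by blast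
qed

lemma out_locally_transitive_tourn_iso:
  assumes "tourn_iso V E W F" "out_locally_transitive W F"
  shows "out_locally_transitive V E"
  unfolding out_locally_transitive_def
proof (intro ballI impI)
  obtain f where f: "bij_betw f V W" and edges: "\<forall>u\<in>V. \<forall>v\<in>V. E u v \<longleftrightarrow> F (f u) (f v)"
    using assms(1) unfolding tourn_iso_def by blast
  fix d a b c assume V: "d \<in> V" "a \<in> V" "b \<in> V" "c \<in> V" and "E d a \<and> E d b \<and> E d c"
  then have "F (f d) (f a) \<and> F (f d) (f b) \<and> F (f d) (f c)" using edges by blast
  moreover have "f d \<in> W" "f a \<in> W" "f b \<in> W" "f c \<in> W"
    using V f bij_betwE by blast+
  ultimately have "\<not> cyclic_triangle F (f a) (f b) (f c)"
    using assms(2) unfolding out_locally_transitive_def by blast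
  then show "\<not> cyclic_triangle E a b c"
    using edges V unfolding cyclic_triangle_def by blast
qed

section \<open>The circulant tournaments \<open>T\<^sub>n\<close>\<close>

lemma T_E_iff:
  assumes "n = 2 * k + 1" "i < n" "j < n"
  shows "T_E n i j \<longleftrightarrow> (i < j \<and> j \<le> i + k) \<or> (j < i \<and> j + k + 1 \<le> i)"
proof -
  have k: "(n - 1) div 2 = k" using assms(1) by simp
  show ?thesis
  proof (cases "i \<le> j")
    case True
    then have m: "(int j - int i) mod int n = int j - int i"
      using assms(2,3) by (intro mod_pos_pos_trivial) linarith+
    show ?thesis using True unfolding T_E_def Let_def k m by auto
  next
    case False
    have "(int j - int i) mod int n = (int j - int i + int n) mod int n" by simp
    also have "\<dots> = int j - int i + int n"
      using False assms(2,3) by (intro mod_pos_pos_trivial) linarith+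
    finally have m: "(int j - int i) mod int n = int j - int i + int n" .
    have "int n = 2 * int k + 1" using assms(1) by simp
    then show ?thesis using False assms(2) unfolding T_E_def Let_def k m by auto
  qed
qed

lemma tournament_T:
  assumes "odd n"
  shows "tournament (T_V n) (T_E n)"
proof -
  obtain k where n: "n = 2 * k + 1" using assms oddE by blast
  have irrefl: "\<forall>i\<in>{0..<n}. \<not> T_E n i i"
    using T_E_iff[OF n] by simp
  have asym: "\<forall>i\<in>{0..<n}. \<forall>j\<in>{0..<n}. i \<noteq> j \<longrightarrow> (T_E n i j \<longleftrightarrow> \<not> T_E n j i)"
  proof (intro ballI impI)
    fix i j assume "i \<in> {0..<n}" "j \<in> {0..<n}" and ij: "i \<noteq> j"
    then have "i < n" "j < n" by simp_all
    then show "T_E n i j \<longleftrightarrow> \<not> T_E n j i"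
      unfolding T_E_iff[OF n \<open>i < n\<close> \<open>j < n\<close>] T_E_iff[OF n \<open>j < n\<close> \<open>i < n\<close>]
      using ij by arith
  qed
  have "{0..<n} \<noteq> {}" using n by simp
  with irrefl asym show ?thesis
    unfolding tournament_def T_V_def by (intro conjI finite_atLeastLessThan)
qed

lemma T_E_offset_less:
  assumes "odd n" "T_E n d a" "T_E n d b" "T_E n a b"
  shows "(int a - int d) mod int n < (int b - int d) mod int n"
proof (rule ccontr)
  define k where "k = (n - 1) div 2"
  have n: "int n = 2 * int k + 1" using assms(1) unfolding k_def by presburger
  define oa where "oa = (int a - int d) mod int n"
  define ob where "ob = (int b - int d) mod int n"
  have a: "1 \<le> oa" "oa \<le> int k" using assms(2) unfolding T_E_def Let_def oa_def k_def by blast+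
  have b: "1 \<le> ob" "ob \<le> int k" using assms(3) unfolding T_E_def Let_def ob_def k_def by blast+
  have ab: "1 \<le> (int b - int a) mod int n" "(int b - int a) mod int n \<le> int k"
    using assms(4) unfolding T_E_def Let_def k_def by blast+
  assume "\<not> (int a - int d) mod int n < (int b - int d) mod int n"
  then have le: "ob \<le> oa" unfolding oa_def ob_def by simp
  have "(ob - oa) mod int n = ((int b - int d) - (int a - int d)) mod int n"
    unfolding oa_def ob_def by (rule mod_diff_eq)
  then have eq: "(int b - int a) mod int n = (ob - oa) mod int n" by simp
  show False
  proof (cases "ob = oa")
    case True
    then show ?thesis using eq ab by simp
  next
    case False
    have "(ob - oa) mod int n = (ob - oa + int n) mod int n" by simp
    also have "\<dots> = ob - oa + int n"
      using False le a b n by (intro mod_pos_pos_trivial) linarith+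
    finally show ?thesis using eq ab a b n le False by linarith
  qed
qed

lemma out_locally_transitive_T:
  assumes "odd n"
  shows "out_locally_transitive (T_V n) (T_E n)"
  unfolding out_locally_transitive_def cyclic_triangle_def
  using T_E_offset_less[OF assms] by (meson less_asym less_trans)

section \<open>Prime tournaments without \<open>D\<^sub>4\<close> are locally transitive\<close>

lemma cyclic_triangle_dominates_out_closed:
  assumes T: "tournament V E" and lt: "out_locally_transitive V E"
    and V: "a \<in> V" "b \<in> V" "c \<in> V" "w \<in> V" "y \<in> V"
    and abc: "cyclic_triangle E a b c" and w: "E a w" "E b w" "E c w" and wy: "E w y"
  shows "E a y \<and> E b y \<and> E c y"
proof -
  have no_dom: "\<not> (E d p \<and> E d q \<and> E d r \<and> cyclic_triangle E p q r)"
    if "d \<in> V" "p \<in> V" "q \<in> V" "r \<in> V" for d p q r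
    using lt that unfolding out_locally_transitive_def by blast
  \<comment> \<open>a triangle edge \<open>p \<rightarrow> q\<close> with \<open>y \<rightarrow> p\<close> and \<open>q \<rightarrow> y\<close> makes \<open>r\<close> or \<open>q\<close> dominate a
      cyclic triangle through \<open>w\<close> and \<open>y\<close>\<close>
  have switch: False
    if pqr: "cyclic_triangle E p q r" "p \<in> V" "q \<in> V" "r \<in> V"
      and "E p w" "E q w" "E r w" "E y p" "E q y" for p q r
  proof (cases "E r y")
    case True
    then show False
      using no_dom[of r p w y] that V wy unfolding cyclic_triangle_def by blast
  next
    case False
    have "y \<noteq> r" using tournament_asym[OF T] V \<open>r \<in> V\<close> \<open>E r w\<close> wy by blast
    then have "E y r" using tournament_total[OF T] V \<open>r \<in> V\<close> False by blast
    then show False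
      using no_dom[of q r w y] that V wy unfolding cyclic_triangle_def by blast
  qed
  have "y \<noteq> a" "y \<noteq> b" "y \<noteq> c" using tournament_asym[OF T] V w wy by blast+
  then have "E a y \<or> E y a" "E b y \<or> E y b" "E c y \<or> E y c"
    using tournament_total[OF T] V by blast+
  moreover have "\<not> (E y a \<and> E y b \<and> E y c)" using no_dom[of y a b c] V abc by blast
  moreover have "cyclic_triangle E b c a" "cyclic_triangle E c a b"
    using abc unfolding cyclic_triangle_def by blast+
  ultimately show ?thesis
    using switch[of a b c] switch[of b c a] switch[of c a b] V w abc by blast
qed

lemma prime_out_locally_transitive_converse:
  assumes T: "tournament V E" and P: "prime_tournament V E" and lt: "out_locally_transitive V E"
  shows "out_locally_transitive V E\<inverse>\<inverse>"
  unfolding out_locally_transitive_def cyclic_triangle_def conversep_iff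
proof (intro ballI impI notI)
  fix v a b c assume V: "v \<in> V" "a \<in> V" "b \<in> V" "c \<in> V"
    and dom: "E a v \<and> E b v \<and> E c v" and "E b a \<and> E c b \<and> E a c"
  then have acb: "cyclic_triangle E a c b" unfolding cyclic_triangle_def by simp
  define B where "B = {w \<in> V. E a w \<and> E c w \<and> E b w}"
  have "homogeneous V E (V - B)"
    unfolding homogeneous_def
  proof (intro conjI ballI)
    fix z assume "z \<in> V - (V - B)"
    then have z: "z \<in> V" "z \<in> B" by auto
    have "E x z" if "x \<in> V - B" for x
    proof (rule ccontr)
      assume "\<not> E x z"
      moreover have "x \<noteq> z" using that z by blast
      ultimately have "E z x" using tournament_total[OF T] z that by blast
      then have "x \<in> B"
        using cyclic_triangle_dominates_out_closed[OF T lt V(2,4,3) _ _ acb] z that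
        unfolding B_def by blast
      then show False using that by blast
    qed
    then show "(\<forall>x\<in>V - B. E z x) \<or> (\<forall>x\<in>V - B. E x z)" by blast
  qed blast
  moreover have "a \<in> V - B" "c \<in> V - B"
    using V tournament_irrefl[OF T] unfolding B_def by blast+
  moreover have "v \<notin> V - B" using V dom acb unfolding B_def cyclic_triangle_def by blast
  ultimately have "a = c"
    using prime_tournament_homogeneous_eq[OF _ P] T V(1) unfolding tournament_def by blast
  then show False using acb tournament_irrefl[OF T V(2)] unfolding cyclic_triangle_def by blast
qed

section \<open>Prime locally transitive tournaments are circulant\<close>

lemma up_closed_eq_atLeastAtMost:
  fixes U :: "nat set"
  assumes "U \<subseteq> {..k}" "\<And>i j. i \<in> U \<Longrightarrow> i \<le> j \<Longrightarrow> j \<le> k \<Longrightarrow> j \<in> U"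
  shows "U = {k + 1 - card U..k}"
proof (cases "U = {}")
  case False
  have "finite U" using assms(1) finite_subset by blast
  have "U = {Min U..k}"
  proof
    show "U \<subseteq> {Min U..k}" using \<open>finite U\<close> assms(1) by auto
    show "{Min U..k} \<subseteq> U" using assms(2)[OF Min_in[OF \<open>finite U\<close> False]] by auto
  qed
  moreover have "Min U \<le> k" using False \<open>finite U\<close> assms(1) Min_in by blast
  ultimately show ?thesis by (metis card_atLeastAtMost diff_diff_cancel le_SucI Suc_eq_plus1)
qed simp

locale prime_locally_transitive =
  fixes V :: "'a set" and E :: "'a \<Rightarrow> 'a \<Rightarrow> bool" and v0 :: 'a
  assumes tournament: "tournament V E"
    and prime: "prime_tournament V E"
    and locally_transitive: "locally_transitive V E"
    and card_V: "3 \<le> card V"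
    and v0: "v0 \<in> V"
begin

definition Out :: "'a set" where "Out = {x \<in> V. E v0 x}"
definition In :: "'a set" where "In = {y \<in> V. E y v0}"
definition beaten :: "'a \<Rightarrow> 'a set" where "beaten x = {y \<in> In. E x y}"
definition rank :: "'a \<Rightarrow> nat" where "rank x = card (beaten x)"

lemma converse: "prime_locally_transitive V E\<inverse>\<inverse> v0"
  using tournament prime locally_transitive card_V v0
  by unfold_locales
    (simp_all add: tournament_converse prime_tournament_converse locally_transitive_converse)

text \<open>Reversing the edges swaps \<open>Out\<close> and \<open>In\<close>, so \<open>dual.rank y\<close> counts the in-neighbours
  of \<open>y \<in> In\<close> in \<open>Out\<close>. A local interpretation only carries the facts proved so far;
  later facts are transferred through \<open>converse\<close>.\<close>

interpretation dual: prime_locally_transitive V "E\<inverse>\<inverse>" v0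
  by (rule converse)

lemma dual_Out: "dual.Out = In"
  unfolding dual.Out_def In_def by simp

lemma dual_In: "dual.In = Out"
  unfolding dual.In_def Out_def by simp

lemma dual_beaten: "dual.beaten y = {x \<in> Out. E x y}"
  unfolding dual.beaten_def dual_In by simp

lemmas irrefl = tournament_irrefl[OF tournament]
  and asym = tournament_asym[OF tournament]
  and total = tournament_total[OF tournament]

lemma finite_V: "finite V"
  using tournament unfolding tournament_def by blast

lemma Out_subset: "Out \<subseteq> V" and In_subset: "In \<subseteq> V"
  unfolding Out_def In_def by auto

lemma finite_Out: "finite Out" and finite_In: "finite In"
  using Out_subset In_subset finite_V finite_subset by auto

lemma v0_notin_Out: "v0 \<notin> Out" and v0_notin_In: "v0 \<notin> In"
  unfolding Out_def In_def using irrefl v0 by auto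

lemma Out_In_disjoint: "x \<in> Out \<Longrightarrow> x \<notin> In"
  unfolding Out_def In_def using asym v0 by blast

lemma V_eq: "V = insert v0 (Out \<union> In)"
  unfolding Out_def In_def using v0 total by auto

lemma card_V_eq: "card V = card Out + card In + 1"
proof -
  have "card (Out \<union> In) = card Out + card In"
    using finite_Out finite_In Out_In_disjoint by (intro card_Un_disjoint) auto
  moreover have "card V = Suc (card (Out \<union> In))"
    by (subst V_eq) (use finite_Out finite_In v0_notin_Out v0_notin_In in simp)
  ultimately show ?thesis by simp
qed

lemma no_dominated_triangle:
  assumes "v \<in> V" "a \<in> V" "b \<in> V" "c \<in> V" "E a v" "E b v" "E c v" "cyclic_triangle E a b c"
  shows False
  using locally_transitive assms
  unfolding locally_transitive_def out_locally_transitive_def cyclic_triangle_def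
  by (metis conversep_iff)

lemma Out_nonempty: "Out \<noteq> {}"
proof
  assume "Out = {}"
  then have "homogeneous V E (V - {v0})"
    unfolding homogeneous_def using V_eq In_def by auto
  moreover have "2 \<le> card (V - {v0})" using card_V v0 finite_V by simp
  then obtain x y where "x \<in> V - {v0}" "y \<in> V - {v0}" "x \<noteq> y"
    by (metis card_le_Suc0_iff_eq finite_V finite_Diff not_less_eq_eq numeral_2_eq_2)
  ultimately show False
    using prime_tournament_homogeneous_eq[OF finite_V prime _ _ _ v0] by blast
qed

lemma In_nonempty: "In \<noteq> {}"
  using prime_locally_transitive.Out_nonempty[OF converse] unfolding dual_Out .

lemma beaten_mono:
  assumes x: "x \<in> Out" and x': "x' \<in> Out" and "E x x'"
  shows "beaten x \<subseteq> beaten x'"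
proof
  fix y assume "y \<in> beaten x"
  then have y: "y \<in> In" "E x y" unfolding beaten_def by auto
  have "E x' y"
  proof (rule ccontr)
    assume "\<not> E x' y"
    moreover have "x' \<noteq> y" using x' y(1) Out_In_disjoint by blast
    ultimately have "E y x'" using total x' y(1) Out_subset In_subset by blast
    then show False
      using no_dominated_triangle[of x' x y v0] x x' y \<open>E x x'\<close> v0 Out_subset In_subset
      unfolding Out_def In_def cyclic_triangle_def by blast
  qed
  then show "y \<in> beaten x'" using y unfolding beaten_def by blast
qed

lemma finite_beaten: "finite (beaten x)"
  unfolding beaten_def using finite_In by simp

lemma rank_mono: "x \<in> Out \<Longrightarrow> x' \<in> Out \<Longrightarrow> E x x' \<Longrightarrow> rank x \<le> rank x'"
  unfolding rank_def using beaten_mono finite_beaten by (intro card_mono)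

lemma rank_le: "rank x \<le> card In"
  unfolding rank_def beaten_def using finite_In by (intro card_mono) auto

lemma rank_less_imp_edge:
  assumes "x \<in> Out" "x' \<in> Out" "rank x < rank x'"
  shows "E x x'"
proof -
  have "\<not> E x' x" using rank_mono[OF assms(2,1)] assms(3) by linarith
  moreover have "x \<noteq> x'" using assms(3) by blast
  ultimately show ?thesis using total assms(1,2) Out_subset by blast
qed

lemma beaten_eq_of_rank_eq:
  assumes "x \<in> Out" "x' \<in> Out" "rank x = rank x'"
  shows "beaten x = beaten x'"
proof (cases "E x x'")
  case True
  then show ?thesis
    using beaten_mono assms finite_beaten card_subset_eq unfolding rank_def by metis
next
  case False
  then have "x = x' \<or> E x' x" using total assms(1,2) Out_subset by blast
  then show ?thesis
    using beaten_mono assms finite_beaten card_subset_eq unfolding rank_def by metis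
qed

lemma homogeneous_rank_class:
  assumes x: "x \<in> Out"
  shows "homogeneous V E {w \<in> Out. rank w = rank x}" (is "homogeneous V E ?X")
  unfolding homogeneous_def
proof (intro conjI ballI)
  show "?X \<subseteq> V" using Out_subset by auto
  fix z assume "z \<in> V - ?X"
  then have z: "z \<in> V" "z \<notin> ?X" by auto
  consider "z = v0" | "z \<in> Out" "rank z < rank x" | "z \<in> Out" "rank x < rank z" | "z \<in> In"
    using V_eq z by fastforce
  then show "(\<forall>w\<in>?X. E z w) \<or> (\<forall>w\<in>?X. E w z)"
  proof cases
    case 1
    then show ?thesis unfolding Out_def by blast
  next
    case 2
    then have "E z w" if "w \<in> ?X" for w using rank_less_imp_edge[OF 2(1), of w] that by simp
    then show ?thesis by blast
  next
    case 3
    then have "E w z" if "w \<in> ?X" for w using rank_less_imp_edge[OF _ 3(1), of w] that by simp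
    then show ?thesis by blast
  next
    case 4
    have beaten_eq: "beaten w = beaten x" if "w \<in> ?X" for w
      using beaten_eq_of_rank_eq that x by blast
    show ?thesis
    proof (cases "E x z")
      case True
      then have "z \<in> beaten w" if "w \<in> ?X" for w
        using beaten_eq[OF that] 4 unfolding beaten_def by blast
      then show ?thesis unfolding beaten_def by blast
    next
      case False
      have "E z w" if "w \<in> ?X" for w
      proof -
        have "w \<noteq> z" "w \<in> V" using that 4 Out_In_disjoint Out_subset by blast+
        moreover have "\<not> E w z"
          using False beaten_eq[OF that] 4 unfolding beaten_def by blast
        ultimately show ?thesis using total z(1) by blast
      qed
      then show ?thesis by blast
    qed
  qed
qed

lemma rank_inj: "inj_on rank Out"
proof (rule inj_onI)
  fix x x' assume "x \<in> Out" "x' \<in> Out" "rank x = rank x'"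
  then show "x = x'"
    using prime_tournament_homogeneous_eq[OF finite_V prime homogeneous_rank_class _ _ v0]
      v0_notin_Out by auto
qed

lemma homogeneous_rank_zero_class: "homogeneous V E (insert v0 {w \<in> Out. rank w = 0})"
  (is "homogeneous V E ?X")
  unfolding homogeneous_def
proof (intro conjI ballI)
  show "?X \<subseteq> V" using Out_subset v0 by auto
  fix z assume "z \<in> V - ?X"
  then have z: "z \<in> V" "z \<noteq> v0" "z \<notin> ?X" by auto
  then consider "z \<in> Out" | "z \<in> In" using V_eq by blast
  then show "(\<forall>w\<in>?X. E z w) \<or> (\<forall>w\<in>?X. E w z)"
  proof cases
    case 1
    then have "0 < rank z" using z(3) by simp
    then have "E w z" if "w \<in> ?X" for w
      using that 1 rank_less_imp_edge[OF _ 1, of w] unfolding Out_def by auto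
    then show ?thesis by blast
  next
    case 2
    have "E z w" if "w \<in> ?X" for w
    proof (cases "w = v0")
      case True
      then show ?thesis using 2 unfolding In_def by blast
    next
      case False
      then have w: "w \<in> Out" "rank w = 0" using that by auto
      then have "\<not> E w z" using 2 finite_beaten[of w] unfolding rank_def beaten_def by simp
      moreover have "w \<noteq> z" "w \<in> V" using w 2 Out_In_disjoint Out_subset by blast+
      ultimately show ?thesis using total z(1) by blast
    qed
    then show ?thesis by blast
  qed
qed

lemma rank_pos:
  assumes x: "x \<in> Out"
  shows "0 < rank x"
proof (rule ccontr)
  assume "\<not> 0 < rank x"
  then have "x \<in> insert v0 {w \<in> Out. rank w = 0}" using x by simp
  moreover obtain z where "z \<in> In" using In_nonempty by blast
  moreover have "z \<notin> insert v0 {w \<in> Out. rank w = 0}"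
    using \<open>z \<in> In\<close> Out_In_disjoint v0_notin_In by blast
  ultimately have "x = v0"
    using prime_tournament_homogeneous_eq[OF finite_V prime homogeneous_rank_zero_class]
      In_subset by blast
  then show False using x v0_notin_Out by blast
qed

lemma card_Out_le_card_In: "card Out \<le> card In"
proof -
  have "card Out = card (rank ` Out)" using card_image[OF rank_inj] by simp
  also have "\<dots> \<le> card {1..card In}"
    using rank_pos rank_le by (intro card_mono) (auto simp: Suc_le_eq)
  finally show ?thesis by simp
qed

lemma card_In_eq: "card In = card Out"
  using card_Out_le_card_In prime_locally_transitive.card_Out_le_card_In[OF converse]
  unfolding dual_Out dual_In by simp

lemma rank_image: "rank ` Out = {1..card Out}"
  using rank_pos rank_le card_In_eq card_image[OF rank_inj]
  by (intro card_subset_eq) (auto simp: Suc_le_eq)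

lemma edge_iff_rank_less:
  assumes "x \<in> Out" "x' \<in> Out"
  shows "E x x' \<longleftrightarrow> rank x < rank x'"
proof
  assume "E x x'"
  then have "x \<noteq> x'" using irrefl assms(1) Out_subset by blast
  then have "rank x \<noteq> rank x'" using rank_inj assms unfolding inj_on_def by blast
  then show "rank x < rank x'" using rank_mono[OF assms \<open>E x x'\<close>] by simp
qed (use rank_less_imp_edge assms in blast)

lemma edge_iff_rank_sum:
  assumes x: "x \<in> Out" and y: "y \<in> In"
  shows "E x y \<longleftrightarrow> card Out < rank x + dual.rank y"
proof -
  define S where "S = dual.beaten y"
  have S: "S = {w \<in> Out. E w y}" unfolding S_def dual_beaten ..
  define U where "U = rank ` S"
  have "U \<subseteq> {..card Out}" using rank_image unfolding U_def S by auto
  moreover have "j \<in> U" if "i \<in> U" "i \<le> j" "j \<le> card Out" for i j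
  proof -
    obtain s where s: "s \<in> Out" "E s y" "i = rank s" using \<open>i \<in> U\<close> unfolding U_def S by blast
    then have "j \<in> rank ` Out" using rank_pos[OF s(1)] that(2,3) rank_image by auto
    then obtain x' where x': "x' \<in> Out" "j = rank x'" by blast
    have "x' \<in> S"
    proof (cases "rank s = rank x'")
      case True
      then show ?thesis using rank_inj s x' unfolding S inj_on_def by blast
    next
      case False
      then have "E s x'" using edge_iff_rank_less s(1) x'(1) s(3) x'(2) that(2) by simp
      then have "y \<in> beaten x'" using beaten_mono[OF s(1) x'(1)] s y unfolding beaten_def by blast
      then show ?thesis using x'(1) unfolding S beaten_def by blast
    qed
    then show ?thesis using x' unfolding U_def by blast
  qed
  \<comment> \<open>the in-neighbours of \<open>y\<close> in \<open>Out\<close> are an up-set for the rank order,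
      hence the \<open>dual.rank y\<close> vertices of largest rank\<close>
  ultimately have U: "U = {card Out + 1 - card U..card Out}"
    by (rule up_closed_eq_atLeastAtMost)
  have "card U = dual.rank y"
    unfolding U_def dual.rank_def S_def[symmetric] S
    using inj_on_subset[OF rank_inj] by (intro card_image) auto
  have "E x y \<longleftrightarrow> rank x \<in> U"
    using x rank_inj unfolding U_def S inj_on_def by blast
  also have "\<dots> \<longleftrightarrow> card Out + 1 - card U \<le> rank x"
    using rank_image x by (subst U) auto
  finally show ?thesis using \<open>card U = dual.rank y\<close> by linarith
qed

lemma rank_bounds: "x \<in> Out \<Longrightarrow> 1 \<le> rank x \<and> rank x \<le> card Out"
  using rank_image imageI[of x Out rank] by simp

lemma dual_rank_bounds: "y \<in> In \<Longrightarrow> 1 \<le> dual.rank y \<and> dual.rank y \<le> card Out"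
  using prime_locally_transitive.rank_bounds[OF converse] unfolding dual_Out card_In_eq .

lemma dual_edge_iff_rank_less: "y \<in> In \<Longrightarrow> y' \<in> In \<Longrightarrow> E y' y \<longleftrightarrow> dual.rank y < dual.rank y'"
  using prime_locally_transitive.edge_iff_rank_less[OF converse] unfolding dual_Out by simp

definition label :: "'a \<Rightarrow> nat" where
  "label w = (if w \<in> Out then rank w else if w \<in> In then 2 * card Out + 1 - dual.rank w else 0)"

lemma label_less: "w \<in> V \<Longrightarrow> label w < 2 * card Out + 1"
  using rank_bounds[of w] dual_rank_bounds[of w] unfolding label_def by auto

lemma label_edge:
  assumes u: "u \<in> V" and v: "v \<in> V" and uv: "E u v"
  shows "T_E (2 * card Out + 1) (label u) (label v)"
proof -
  define k where "k = card Out"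
  have Out_rank: "1 \<le> rank w \<and> rank w \<le> k" if "w \<in> Out" for w
    using rank_bounds that unfolding k_def .
  have In_rank: "1 \<le> dual.rank w \<and> dual.rank w \<le> k" if "w \<in> In" for w
    using dual_rank_bounds that unfolding k_def .
  have label_Out: "label w = rank w" if "w \<in> Out" for w
    using that unfolding label_def by simp
  have label_In: "label w = 2 * k + 1 - dual.rank w" if "w \<in> In" for w
    using that Out_In_disjoint unfolding label_def k_def by auto
  have label_v0: "label v0 = 0"
    using v0_notin_Out v0_notin_In unfolding label_def by simp
  consider "u = v0" "v \<in> Out" | "u \<in> Out" "v \<in> Out" | "u \<in> Out" "v \<in> In"
    | "u \<in> In" "v = v0" | "u \<in> In" "v \<in> Out" | "u \<in> In" "v \<in> In"
  proof -
    have "u \<in> insert v0 (Out \<union> In)" "v \<in> insert v0 (Out \<union> In)" using u v V_eq by auto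
    moreover have "u = v0 \<Longrightarrow> v \<in> Out" using uv v unfolding Out_def by blast
    moreover have "u \<in> Out \<Longrightarrow> v \<noteq> v0" using uv u Out_In_disjoint unfolding In_def by blast
    ultimately show thesis using that by blast
  qed
  then have "(label u < label v \<and> label v \<le> label u + k) \<or>
    (label v < label u \<and> label v + k + 1 \<le> label u)"
  proof cases
    case 1
    then show ?thesis using label_v0 label_Out[of v] Out_rank[of v] by simp
  next
    case 2
    then show ?thesis
      using uv edge_iff_rank_less label_Out[of u] label_Out[of v] Out_rank[of v] by simp
  next
    case 3
    then have "k < rank u + dual.rank v" using uv edge_iff_rank_sum unfolding k_def by blast
    then show ?thesis using label_Out[OF 3(1)] label_In[OF 3(2)] Out_rank[OF 3(1)] In_rank[OF 3(2)]
      by linarith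
  next
    case 4
    then show ?thesis unfolding 4(2) using label_v0 label_In[OF 4(1)] In_rank[OF 4(1)] by linarith
  next
    case 5
    then have "\<not> E v u" using uv asym u v by blast
    then have "rank v + dual.rank u \<le> k" using 5 edge_iff_rank_sum unfolding k_def by simp
    then show ?thesis using label_Out[OF 5(2)] label_In[OF 5(1)] Out_rank[OF 5(2)] In_rank[OF 5(1)]
      by linarith
  next
    case 6
    then have "dual.rank v < dual.rank u" using uv dual_edge_iff_rank_less by blast
    then show ?thesis using label_In[OF 6(1)] label_In[OF 6(2)] In_rank[OF 6(1)] In_rank[OF 6(2)]
      by linarith
  qed
  then show ?thesis
    unfolding T_E_iff[OF refl label_less[OF u] label_less[OF v]] k_def .
qed

lemma tourn_iso_T: "tourn_iso V E (T_V (2 * card Out + 1)) (T_E (2 * card Out + 1))"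
proof (rule tourn_iso_of_edge_map[OF tournament tournament_T])
  show "odd (2 * card Out + 1)" by simp
  show "label ` V \<subseteq> T_V (2 * card Out + 1)" using label_less unfolding T_V_def by auto
  show "card (T_V (2 * card Out + 1)) = card V" using card_V_eq card_In_eq unfolding T_V_def by simp
qed (rule label_edge)

end

theorem theorem3p8:
  fixes V :: "'a set" and E :: "'a \<Rightarrow> 'a \<Rightarrow> bool"
  assumes "tournament V E" and "prime_tournament V E" and "card V \<ge> 3"
  shows "\<not> has_subtournament V E D4_V D4_E \<longleftrightarrow>
         (\<exists>n::nat. odd n \<and> n \<ge> 3 \<and> tourn_iso V E (T_V n) (T_E n))"
proof -
  have "out_locally_transitive V E \<longleftrightarrow>
    (\<exists>n::nat. odd n \<and> n \<ge> 3 \<and> tourn_iso V E (T_V n) (T_E n))"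
  proof
    assume lt: "out_locally_transitive V E"
    have "locally_transitive V E"
      unfolding locally_transitive_def
      using lt prime_out_locally_transitive_converse[OF assms(1,2) lt] ..
    moreover obtain v0 where "v0 \<in> V" using assms(1) unfolding tournament_def by blast
    ultimately interpret prime_locally_transitive V E v0
      using assms by unfold_locales
    have "card Out \<noteq> 0" using Out_nonempty finite_Out by simp
    then show "\<exists>n::nat. odd n \<and> n \<ge> 3 \<and> tourn_iso V E (T_V n) (T_E n)"
      using tourn_iso_T by (intro exI[of _ "2 * card Out + 1"]) simp
  next
    assume "\<exists>n::nat. odd n \<and> n \<ge> 3 \<and> tourn_iso V E (T_V n) (T_E n)"
    then show "out_locally_transitive V E"
      using out_locally_transitive_tourn_iso out_locally_transitive_T by blast
  qed
  then show ?thesis unfolding has_subtournament_D4_iff[OF assms(1)] by blast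
qed

end
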